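(* For a free $E$-linear code $C$ of length $2n$, $\mathrm{rank}(SHull(C))=\dim_{\mathbb{F}_2}(SHull(C_{Res}))$.
   Context: $E=\langle \kappa,\tau \mid 2\kappa=2\tau=0,\ \kappa^2=\kappa,\ \tau^2=\tau,\ \kappa\tau=\kappa,\ \tau\kappa=\tau\rangle$ is the non-unital ring $\{0,\kappa,\tau,\zeta\}$, $\zeta=\kappa+\tau$, with $e\kappa=e\tau=e$, $e\zeta=0$ for all $e\in E$. Every $e\in E$ is uniquely $u\kappa+v\zeta$ ($u,v\in\mathbb{F}_2$); $\pi(u\kappa+v\zeta)=u$, componentwise. An $E$-linear code of length $2n$ is a left $E$-submodule $C\subseteq E^{2n}$; $C_{Res}=\pi(C)$, $C_{Tor}=\{v\in\mathbb{F}_2^{2n}:\zeta v\in C\}$ (componentwise, $0\cdot\zeta=0,1\cdot\zeta=\zeta$); $C$ is free if $C_{Res}=C_{Tor}$. A finite set $X\subseteq E^{2n}$ generates $C$ if $C$ equals the union of the $E$-span $\{\sum e_jx_j:e_j\in E\}$ and the $\mathbb{F}_2$-span $\{\sum u_jx_j:u_j\in\mathbb{F}_2\}$ of $X$; the rank of a free code is the cardinality of a minimal generating set. Symplectic inner product (over $E$ or $\mathbb{F}_2$): $\langle (u|v),(u'|v')\rangle_s=\sum_i u_iv'_i+\sum_i v_iu'_i$. For binary $B$: $B^{\perp_S}=\{z:\langle z,w\rangle_s=0\ \forall w\in B\}$, $SHull(B)=B\cap B^{\perp_S}$. For $E$-linear $C$: $C^{\perp_S}=\{z\in E^{2n}:\langle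 z,w\rangle_s=\langle w,z\rangle_s=0\ \forall w\in C\}$, $SHull(C)=C\cap C^{\perp_S}$ (free whenever $C$ is free). *)

theory Defs
  imports Main "HOL-Library.Z2"
begin

datatype E = EZero | Kap | Tau | Zet

instantiation E :: comm_monoid_add
begin
definition zero_E :: E where "zero_E = EZero"
fun plus_E :: "E \<Rightarrow> E \<Rightarrow> E" where
  "plus_E EZero y = y"
| "plus_E x EZero = x"
| "plus_E Kap Kap = EZero"
| "plus_E Tau Tau = EZero"
| "plus_E Zet Zet = EZero"
| "plus_E Kap Tau = Zet"
| "plus_E Tau Kap = Zet"
| "plus_E Kap Zet = Tau"
| "plus_E Zet Kap = Tau"
| "plus_E Tau Zet = Kap"
| "plus_E Zet Tau = Kap"
instance
proof
  fix a b c :: E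
  show "a + b + c = a + (b + c)" by (cases a; cases b; cases c) simp_all
  show "a + b = b + a" by (cases a; cases b) simp_all
  show "0 + a = a" by (simp add: zero_E_def)
qed
end

instantiation E :: times
begin
fun times_E :: "E \<Rightarrow> E \<Rightarrow> E" where
  "times_E x Kap = x"
| "times_E x Tau = x"
| "times_E x Zet = EZero"
| "times_E x EZero = EZero"
instance ..
end

text \<open>pi(u kappa + v zeta) = u; zeta-embedding of F2 into E.\<close>
fun piE :: "E \<Rightarrow> bit" where
  "piE EZero = 0" | "piE Kap = 1" | "piE Tau = 1" | "piE Zet = 0"

definition zetaB :: "bit \<Rightarrow> E" where
  "zetaB b = (if b = 1 then Zet else EZero)"

section \<open>Vectors of length 2n, indexed 0..<2n (u-part: i<n, v-part: n+i)\<close>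

definition Evecs :: "nat \<Rightarrow> (nat \<Rightarrow> E) set" where
  "Evecs n = {x. \<forall>i\<ge>2*n. x i = 0}"

definition Bvecs :: "nat \<Rightarrow> (nat \<Rightarrow> bit) set" where
  "Bvecs n = {x. \<forall>i\<ge>2*n. x i = 0}"

definition sympE :: "nat \<Rightarrow> (nat \<Rightarrow> E) \<Rightarrow> (nat \<Rightarrow> E) \<Rightarrow> E" where
  "sympE n x y = (\<Sum>i<n. x i * y (n+i)) + (\<Sum>i<n. x (n+i) * y i)"

definition sympB :: "nat \<Rightarrow> (nat \<Rightarrow> bit) \<Rightarrow> (nat \<Rightarrow> bit) \<Rightarrow> bit" where
  "sympB n x y = (\<Sum>i<n. x i * y (n+i)) + (\<Sum>i<n. x (n+i) * y i)"

definition E_linear :: "nat \<Rightarrow> (nat \<Rightarrow> E) set \<Rightarrow> bool" where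
  "E_linear n C \<longleftrightarrow> C \<subseteq> Evecs n \<and> (\<lambda>i. 0) \<in> C
     \<and> (\<forall>x\<in>C. \<forall>y\<in>C. (\<lambda>i. x i + y i) \<in> C)
     \<and> (\<forall>e. \<forall>x\<in>C. (\<lambda>i. e * x i) \<in> C)"

definition Res :: "(nat \<Rightarrow> E) set \<Rightarrow> (nat \<Rightarrow> bit) set" where
  "Res C = (\<lambda>x. \<lambda>i. piE (x i)) ` C"

definition Tor :: "nat \<Rightarrow> (nat \<Rightarrow> E) set \<Rightarrow> (nat \<Rightarrow> bit) set" where
  "Tor n C = {v \<in> Bvecs n. (\<lambda>i. zetaB (v i)) \<in> C}"

definition free_code :: "nat \<Rightarrow> (nat \<Rightarrow> E) set \<Rightarrow> bool" where
  "free_code n C \<longleftrightarrow> Res C = Tor n C"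

definition E_span :: "(nat \<Rightarrow> E) set \<Rightarrow> (nat \<Rightarrow> E) set" where
  "E_span X = {(\<lambda>i. \<Sum>x\<in>X. c x * x i) | c. True}"

definition F2_span_E :: "(nat \<Rightarrow> E) set \<Rightarrow> (nat \<Rightarrow> E) set" where
  "F2_span_E X = {(\<lambda>i. \<Sum>x\<in>{x\<in>X. u x = (1::bit)}. x i) | u. True}"

definition generates :: "nat \<Rightarrow> (nat \<Rightarrow> E) set \<Rightarrow> (nat \<Rightarrow> E) set \<Rightarrow> bool" where
  "generates n X C \<longleftrightarrow> finite X \<and> X \<subseteq> Evecs n \<and> C = E_span X \<union> F2_span_E X"

definition rankE :: "nat \<Rightarrow> (nat \<Rightarrow> E) set \<Rightarrow> nat" where
  "rankE n C = (LEAST k. \<exists>X. generates n X C \<and> card X = k)"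

definition sperpE :: "nat \<Rightarrow> (nat \<Rightarrow> E) set \<Rightarrow> (nat \<Rightarrow> E) set" where
  "sperpE n C = {z \<in> Evecs n. \<forall>w\<in>C. sympE n z w = 0 \<and> sympE n w z = 0}"

definition SHullE :: "nat \<Rightarrow> (nat \<Rightarrow> E) set \<Rightarrow> (nat \<Rightarrow> E) set" where
  "SHullE n C = C \<inter> sperpE n C"

definition F2_span :: "(nat \<Rightarrow> bit) set \<Rightarrow> (nat \<Rightarrow> bit) set" where
  "F2_span X = {(\<lambda>i. \<Sum>x\<in>X. u x * x i) | u. True}"

definition dimF2 :: "(nat \<Rightarrow> bit) set \<Rightarrow> nat" where
  "dimF2 B = (LEAST k. \<exists>X. finite X \<and> X \<subseteq> B \<and> F2_span X = B \<and> card X = k)"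

definition sperpB :: "nat \<Rightarrow> (nat \<Rightarrow> bit) set \<Rightarrow> (nat \<Rightarrow> bit) set" where
  "sperpB n B = {z \<in> Bvecs n. \<forall>w\<in>B. sympB n z w = 0}"

definition SHullB :: "nat \<Rightarrow> (nat \<Rightarrow> bit) set \<Rightarrow> (nat \<Rightarrow> bit) set" where
  "SHullB n B = B \<inter> sperpB n B"

end

theory Submission
  imports Defs
begin

text \<open>Write e = u\<kappa> + v\<zeta>. Right multiplication by e' scales e by \<pi>(e'), so an E-multiple e z of a word
z depends on z only through its residue, and so does the symplectic form of w and z. Hence a free
code is C = \<kappa>R + \<zeta>R with R = Res C, the set of words both of whose coordinate vectors lie in
R, and SHull(C) = \<kappa>H + \<zeta>H with H = SHull(R). The code \<kappa>H + \<zeta>H is generated by \<kappa>Y for a basis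
Y of H, while the residues of any of its generating sets span H; so its rank is dim H.\<close>

(* Sums and products of bits stay ring operations instead of becoming xor and conjunction. *)
declare add_bit_eq_xor [simp del] mult_bit_eq_and [simp del]

(* Together with piE: e = piE e \<kappa> + zeta_coord e \<zeta>. *)
fun zeta_coord :: "E \<Rightarrow> bit" where
  "zeta_coord EZero = 0" | "zeta_coord Kap = 0" | "zeta_coord Tau = 1" | "zeta_coord Zet = 1"

fun E_of_coords :: "bit \<Rightarrow> bit \<Rightarrow> E" where
  "E_of_coords 0 0 = EZero" | "E_of_coords 1 0 = Kap"
| "E_of_coords 0 1 = Zet" | "E_of_coords 1 1 = Tau"

lemma piE_zero [simp]: "piE 0 = 0"
  by (simp add: zero_E_def)

lemma zeta_coord_zero [simp]: "zeta_coord 0 = 0"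
  by (simp add: zero_E_def)

lemma piE_add: "piE (a + b) = piE a + piE b"
  by (cases a; cases b) simp_all

lemma zeta_coord_add: "zeta_coord (a + b) = zeta_coord a + zeta_coord b"
  by (cases a; cases b) simp_all

lemma piE_mult: "piE (a * b) = piE a * piE b"
  by (cases a; cases b) simp_all

lemma zeta_coord_mult: "zeta_coord (a * b) = zeta_coord a * piE b"
  by (cases a; cases b) simp_all

lemma piE_sum: "piE (\<Sum>x\<in>S. f x) = (\<Sum>x\<in>S. piE (f x))"
  by (induction S rule: infinite_finite_induct) (simp_all add: piE_add)

lemma zeta_coord_sum: "zeta_coord (\<Sum>x\<in>S. f x) = (\<Sum>x\<in>S. zeta_coord (f x))"
  by (induction S rule: infinite_finite_induct) (simp_all add: zeta_coord_add)

lemma piE_E_of_coords [simp]: "piE (E_of_coords u v) = u"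
  by (cases u; cases v) simp_all

lemma zeta_coord_E_of_coords [simp]: "zeta_coord (E_of_coords u v) = v"
  by (cases u; cases v) simp_all

lemma E_eq_iff_coords: "a = b \<longleftrightarrow> piE a = piE b \<and> zeta_coord a = zeta_coord b"
  by (cases a; cases b) simp_all

lemma E_eq_0_iff_coords: "a = 0 \<longleftrightarrow> piE a = 0 \<and> zeta_coord a = 0"
  by (simp add: E_eq_iff_coords [of a 0])

definition pi_vec :: "(nat \<Rightarrow> E) \<Rightarrow> nat \<Rightarrow> bit" where
  "pi_vec z i = piE (z i)"

definition zeta_vec :: "(nat \<Rightarrow> E) \<Rightarrow> nat \<Rightarrow> bit" where
  "zeta_vec z i = zeta_coord (z i)"

definition kappa_vec :: "(nat \<Rightarrow> bit) \<Rightarrow> nat \<Rightarrow> E" where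
  "kappa_vec y i = (if y i = 1 then Kap else EZero)"

lemma piE_kappa_vec [simp]: "piE (kappa_vec y i) = y i"
  by (cases "y i") (simp_all add: kappa_vec_def)

lemma pi_vec_kappa_vec [simp]: "pi_vec (kappa_vec y) = y"
  by (simp add: pi_vec_def fun_eq_iff)

lemma zeta_vec_kappa_vec [simp]: "zeta_vec (kappa_vec y) = (\<lambda>i. 0)"
  by (simp add: zeta_vec_def kappa_vec_def fun_eq_iff)

lemma inj_kappa_vec: "inj kappa_vec"
  by (metis injI pi_vec_kappa_vec)

lemma Res_eq_image_pi_vec: "Res C = pi_vec ` C"
  by (simp add: Res_def pi_vec_def [abs_def])

lemma vec_eq_iff_coords: "z = z' \<longleftrightarrow> pi_vec z = pi_vec z' \<and> zeta_vec z = zeta_vec z'"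
  by (auto simp: fun_eq_iff pi_vec_def zeta_vec_def E_eq_iff_coords [of "z _"])

lemma piE_sympE: "piE (sympE n z w) = sympB n (pi_vec z) (pi_vec w)"
  by (simp add: sympE_def sympB_def pi_vec_def piE_add piE_sum piE_mult)

lemma zeta_coord_sympE: "zeta_coord (sympE n z w) = sympB n (zeta_vec z) (pi_vec w)"
  by (simp add: sympE_def sympB_def zeta_vec_def pi_vec_def zeta_coord_add zeta_coord_sum
      zeta_coord_mult)

lemma sympE_eq_0_iff:
  "sympE n z w = 0 \<longleftrightarrow> sympB n (pi_vec z) (pi_vec w) = 0 \<and> sympB n (zeta_vec z) (pi_vec w) = 0"
  by (simp add: E_eq_0_iff_coords [of "sympE n z w"] piE_sympE zeta_coord_sympE)

lemma sympB_commute: "sympB n a b = sympB n b a"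
  unfolding sympB_def by (simp add: mult.commute add.commute)

lemma sympB_add_left: "sympB n (\<lambda>i. a i + b i) c = sympB n a c + sympB n b c"
  unfolding sympB_def distrib_right sum.distrib by (simp only: add_ac)

lemma sympB_zero_left [simp]: "sympB n (\<lambda>i. 0) c = 0"
  by (simp add: sympB_def)

definition add_closed :: "(nat \<Rightarrow> 'a::comm_monoid_add) set \<Rightarrow> bool" where
  "add_closed V \<longleftrightarrow> (\<lambda>i. 0) \<in> V \<and> (\<forall>a\<in>V. \<forall>b\<in>V. (\<lambda>i. a i + b i) \<in> V)"

lemma add_closed_sum:
  assumes V: "add_closed V" and f: "\<And>x. x \<in> S \<Longrightarrow> f x \<in> V"
  shows "(\<lambda>i. \<Sum>x\<in>S. f x i) \<in> V"
  using f
proof (induction S rule: infinite_finite_induct)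
  case (insert x S)
  then show ?case using V by (simp add: add_closed_def)
qed (use V in \<open>simp_all add: add_closed_def\<close>)

lemma add_closed_scale_bit:
  assumes "add_closed V" and "y \<in> V"
  shows "(\<lambda>i. (b::bit) * y i) \<in> V"
proof (cases "b = 0")
  case True
  then show ?thesis using assms(1) by (simp add: add_closed_def)
qed (use assms(2) in simp)

lemma F2_spanI: "x = (\<lambda>i. \<Sum>y\<in>X. u y * y i) \<Longrightarrow> x \<in> F2_span X"
  unfolding F2_span_def by blast

lemma F2_span_subset:
  assumes V: "add_closed V" and "X \<subseteq> V"
  shows "F2_span X \<subseteq> V"
proof
  fix z assume "z \<in> F2_span X"
  then obtain u where "z = (\<lambda>i. \<Sum>x\<in>X. u x * x i)"
    unfolding F2_span_def by blast
  also have "\<dots> \<in> V"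
    using assms by (intro add_closed_sum [OF V] add_closed_scale_bit) auto
  finally show "z \<in> V" .
qed

lemma F2_span_superset:
  assumes "finite X"
  shows "X \<subseteq> F2_span X"
proof
  fix x assume "x \<in> X"
  then have "x = (\<lambda>i. \<Sum>y\<in>X. (if y = x then 1 else 0) * y i)"
    using assms by (simp add: if_distrib [of "\<lambda>c. c * _"] sum.delta cong: if_cong)
  then show "x \<in> F2_span X"
    by (rule F2_spanI)
qed

lemma add_closed_F2_span: "add_closed (F2_span X)"
  unfolding add_closed_def
proof (intro conjI ballI)
  show "(\<lambda>i. 0) \<in> F2_span X"
    by (rule F2_spanI [where u = "\<lambda>_. 0"]) simp
  fix a b assume "a \<in> F2_span X" "b \<in> F2_span X"
  then obtain u v where "a = (\<lambda>i. \<Sum>x\<in>X. u x * x i)" "b = (\<lambda>i. \<Sum>x\<in>X. v x * x i)"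
    unfolding F2_span_def by blast
  then have "(\<lambda>i. a i + b i) = (\<lambda>i. \<Sum>x\<in>X. (u x + v x) * x i)"
    by (simp only: distrib_right sum.distrib)
  then show "(\<lambda>i. a i + b i) \<in> F2_span X"
    by (rule F2_spanI)
qed

lemma finite_Bvecs: "finite (Bvecs n)"
proof -
  have "finite (UNIV :: bit set)"
    by (metis UNIV_eq_I bit_not_zero_iff finite.intros insertCI)
  then have "finite {f :: nat \<Rightarrow> bit. \<forall>i. (i \<in> {..<2*n} \<longrightarrow> f i \<in> UNIV) \<and> (i \<notin> {..<2*n} \<longrightarrow> f i = 0)}"
    by (intro finite_set_of_finite_funs) simp_all
  then show ?thesis
    by (simp add: Bvecs_def not_less)
qed

lemma dimF2_attained:
  assumes "add_closed H" and "finite H"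
  obtains Y where "finite Y" "Y \<subseteq> H" "F2_span Y = H" "card Y = dimF2 H"
proof -
  have "F2_span H = H"
    using F2_span_subset [OF assms(1)] F2_span_superset [OF assms(2)] by blast
  then have "\<exists>Y. finite Y \<and> Y \<subseteq> H \<and> F2_span Y = H \<and> card Y = card H"
    using assms(2) by blast
  then have "\<exists>Y. finite Y \<and> Y \<subseteq> H \<and> F2_span Y = H \<and> card Y = dimF2 H"
    unfolding dimF2_def by (rule LeastI_ex [OF exI])
  with that show ?thesis by blast
qed

lemma add_closed_SHullB:
  assumes "add_closed R"
  shows "add_closed (SHullB n R)"
  using assms by (simp add: add_closed_def SHullB_def sperpB_def Bvecs_def sympB_add_left)

lemma SHullB_subset_Bvecs: "SHullB n R \<subseteq> Bvecs n"
  by (auto simp: SHullB_def sperpB_def)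

section \<open>The code \<kappa>H + \<zeta>H\<close>

definition coord_code :: "(nat \<Rightarrow> bit) set \<Rightarrow> (nat \<Rightarrow> E) set" where
  "coord_code H = {z. pi_vec z \<in> H \<and> zeta_vec z \<in> H}"

lemma add_closed_coord_code:
  assumes "add_closed H"
  shows "add_closed (coord_code H)"
proof -
  have "pi_vec (\<lambda>i. a i + b i) = (\<lambda>i. pi_vec a i + pi_vec b i)"
    "zeta_vec (\<lambda>i. a i + b i) = (\<lambda>i. zeta_vec a i + zeta_vec b i)" for a b
    by (simp_all add: fun_eq_iff pi_vec_def zeta_vec_def piE_add zeta_coord_add)
  moreover have "pi_vec (\<lambda>i. 0) = (\<lambda>i. 0)" "zeta_vec (\<lambda>i. 0) = (\<lambda>i. 0)"
    by (simp_all add: fun_eq_iff pi_vec_def zeta_vec_def)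
  ultimately show ?thesis
    using assms by (simp add: add_closed_def coord_code_def)
qed

lemma coord_code_scale:
  assumes "add_closed H" and "z \<in> coord_code H"
  shows "(\<lambda>i. e * z i) \<in> coord_code H"
proof -
  have "pi_vec (\<lambda>i. e * z i) = (\<lambda>i. piE e * pi_vec z i)"
    "zeta_vec (\<lambda>i. e * z i) = (\<lambda>i. zeta_coord e * pi_vec z i)"
    by (simp_all add: fun_eq_iff pi_vec_def zeta_vec_def piE_mult zeta_coord_mult)
  then show ?thesis
    using assms by (simp add: coord_code_def add_closed_scale_bit)
qed

lemma kappa_vec_in_coord_code:
  assumes "add_closed H" and "y \<in> H"
  shows "kappa_vec y \<in> coord_code H"
  using assms by (simp add: coord_code_def add_closed_def)

lemma coord_code_subset_Evecs:
  assumes "H \<subseteq> Bvecs n"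
  shows "coord_code H \<subseteq> Evecs n"
  using assms
  by (auto simp: coord_code_def Evecs_def Bvecs_def pi_vec_def zeta_vec_def E_eq_0_iff_coords)

lemma E_span_subset:
  assumes "add_closed D" and "\<And>e z. z \<in> D \<Longrightarrow> (\<lambda>i. e * z i) \<in> D" and "X \<subseteq> D"
  shows "E_span X \<subseteq> D"
  using assms by (auto simp: E_span_def intro!: add_closed_sum)

lemma F2_span_E_subset:
  assumes "add_closed D" and "X \<subseteq> D"
  shows "F2_span_E X \<subseteq> D"
  using assms by (auto simp: F2_span_E_def intro!: add_closed_sum)

lemma F2_span_E_superset: "X \<subseteq> F2_span_E X"
proof
  fix x assume "x \<in> X"
  then have "{y \<in> X. (if y = x then 1 else 0) = (1::bit)} = {x}"
    by auto
  then show "x \<in> F2_span_E X"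
    unfolding F2_span_E_def by (intro CollectI exI [where x = "\<lambda>y. if y = x then 1 else 0"]) simp
qed

lemma pi_vec_sum: "pi_vec (\<lambda>i. \<Sum>x\<in>S. f x i) = (\<lambda>i. \<Sum>x\<in>S. pi_vec (f x) i)"
  by (simp add: fun_eq_iff pi_vec_def piE_sum)

lemma pi_vec_spans:
  assumes "finite X" and "z \<in> E_span X \<union> F2_span_E X"
  shows "pi_vec z \<in> F2_span (pi_vec ` X)"
proof -
  have gen: "pi_vec x \<in> F2_span (pi_vec ` X)" if "x \<in> X" for x
    using F2_span_superset [of "pi_vec ` X"] assms(1) that by blast
  from assms(2) show ?thesis
  proof
    assume "z \<in> E_span X"
    then obtain c where "z = (\<lambda>i. \<Sum>x\<in>X. c x * x i)"
      unfolding E_span_def by blast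
    then have "pi_vec z = (\<lambda>i. \<Sum>x\<in>X. piE (c x) * pi_vec x i)"
      by (simp add: pi_vec_sum) (simp add: pi_vec_def piE_mult)
    also have "\<dots> \<in> F2_span (pi_vec ` X)"
      by (intro add_closed_sum add_closed_F2_span add_closed_scale_bit gen)
    finally show ?thesis .
  next
    assume "z \<in> F2_span_E X"
    then obtain u where "z = (\<lambda>i. \<Sum>x\<in>{x \<in> X. u x = (1::bit)}. x i)"
      unfolding F2_span_E_def by blast
    then have "pi_vec z = (\<lambda>i. \<Sum>x\<in>{x \<in> X. u x = 1}. pi_vec x i)"
      by (simp add: pi_vec_sum)
    also have "\<dots> \<in> F2_span (pi_vec ` X)"
      by (intro add_closed_sum add_closed_F2_span gen) simp
    finally show ?thesis .
  qed
qed

lemma coord_code_F2_span_subset_E_span: "coord_code (F2_span Y) \<subseteq> E_span (kappa_vec ` Y)"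
proof
  fix z assume "z \<in> coord_code (F2_span Y)"
  then obtain u v where u: "pi_vec z = (\<lambda>i. \<Sum>y\<in>Y. u y * y i)"
    and v: "zeta_vec z = (\<lambda>i. \<Sum>y\<in>Y. v y * y i)"
    unfolding coord_code_def F2_span_def by blast
  (* As e \<kappa> = e, the coefficient u \<kappa> + v \<zeta> of \<kappa>y adds u y to the residue and v y to the \<zeta>-part. *)
  define c where "c x = E_of_coords (u (pi_vec x)) (v (pi_vec x))" for x
  have "z i = (\<Sum>y\<in>Y. c (kappa_vec y) * kappa_vec y i)" for i
    using fun_cong [OF u, of i] fun_cong [OF v, of i]
    by (simp add: E_eq_iff_coords [of "z i"] pi_vec_def zeta_vec_def c_def piE_sum zeta_coord_sum
        piE_mult zeta_coord_mult)
  also have "(\<Sum>y\<in>Y. c (kappa_vec y) * kappa_vec y i) = (\<Sum>x\<in>kappa_vec ` Y. c x * x i)" for i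
    by (simp add: sum.reindex inj_on_subset [OF inj_kappa_vec])
  finally show "z \<in> E_span (kappa_vec ` Y)"
    unfolding E_span_def by blast
qed

lemma generates_kappa_vec:
  assumes H: "add_closed H" "H \<subseteq> Bvecs n" and Y: "finite Y" "Y \<subseteq> H" "F2_span Y = H"
  shows "generates n (kappa_vec ` Y) (coord_code H)"
proof -
  have X: "kappa_vec ` Y \<subseteq> coord_code H"
    using Y(2) kappa_vec_in_coord_code [OF H(1)] by blast
  have "E_span (kappa_vec ` Y) \<union> F2_span_E (kappa_vec ` Y) \<subseteq> coord_code H"
    using X add_closed_coord_code [OF H(1)] coord_code_scale [OF H(1)]
    by (intro Un_least E_span_subset F2_span_E_subset) auto
  moreover have "coord_code H \<subseteq> E_span (kappa_vec ` Y)"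
    using coord_code_F2_span_subset_E_span [of Y] Y(3) by simp
  ultimately show ?thesis
    unfolding generates_def using Y(1) X coord_code_subset_Evecs [OF H(2)] by blast
qed

lemma dimF2_le_card_generates:
  assumes H: "add_closed H" and X: "generates n X (coord_code H)"
  shows "dimF2 H \<le> card X"
proof -
  have fin: "finite X" and D: "coord_code H = E_span X \<union> F2_span_E X"
    using X by (auto simp: generates_def)
  have "X \<subseteq> coord_code H"
    using D F2_span_E_superset [of X] by blast
  then have "pi_vec ` X \<subseteq> H"
    by (auto simp: coord_code_def)
  moreover have "H \<subseteq> F2_span (pi_vec ` X)"
  proof
    fix h assume "h \<in> H"
    then have "kappa_vec h \<in> E_span X \<union> F2_span_E X"
      using D kappa_vec_in_coord_code [OF H] by blast
    then show "h \<in> F2_span (pi_vec ` X)"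
      using pi_vec_spans [OF fin] by fastforce
  qed
  ultimately have "F2_span (pi_vec ` X) = H"
    using F2_span_subset [OF H] by blast
  then have "dimF2 H \<le> card (pi_vec ` X)"
    unfolding dimF2_def using fin \<open>pi_vec ` X \<subseteq> H\<close> by (intro Least_le) blast
  also have "\<dots> \<le> card X"
    using fin by (rule card_image_le)
  finally show ?thesis .
qed

lemma rankE_coord_code:
  assumes H: "add_closed H" "H \<subseteq> Bvecs n"
  shows "rankE n (coord_code H) = dimF2 H"
  unfolding rankE_def
proof (rule Least_equality)
  obtain Y where Y: "finite Y" "Y \<subseteq> H" "F2_span Y = H" "card Y = dimF2 H"
    using dimF2_attained H finite_subset [OF H(2) finite_Bvecs] by metis
  have "card (kappa_vec ` Y) = dimF2 H"
    using Y(4) card_image [OF inj_on_subset [OF inj_kappa_vec]] by simp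
  then show "\<exists>X. generates n X (coord_code H) \<and> card X = dimF2 H"
    using generates_kappa_vec [OF H Y(1-3)] by blast
qed (use dimF2_le_card_generates [OF H(1)] in blast)

lemma free_code_eq_coord_code:
  assumes lin: "E_linear n C" and free: "free_code n C"
  shows "C = coord_code (Res C)"
proof (intro equalityI subsetI)
  have add: "\<And>x y. x \<in> C \<Longrightarrow> y \<in> C \<Longrightarrow> (\<lambda>i. x i + y i) \<in> C"
    and scale: "\<And>e x. x \<in> C \<Longrightarrow> (\<lambda>i. e * x i) \<in> C"
    using lin by (auto simp: E_linear_def)
  fix z
  assume z: "z \<in> C"
  (* \<kappa> e = \<pi>(e) \<kappa>, so e + \<kappa> e is the \<zeta>-part of e. *)
  have "z i + Kap * z i = zetaB (zeta_vec z i)" for i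
    by (cases "z i") (simp_all add: zetaB_def zeta_vec_def zero_E_def)
  with add [OF z scale [OF z, of Kap]] have "(\<lambda>i. zetaB (zeta_vec z i)) \<in> C"
    by simp
  moreover have "zeta_vec z \<in> Bvecs n"
    using z lin by (auto simp: E_linear_def Evecs_def Bvecs_def zeta_vec_def)
  ultimately have "zeta_vec z \<in> Res C"
    using free by (simp add: free_code_def Tor_def)
  with z show "z \<in> coord_code (Res C)"
    by (simp add: coord_code_def Res_eq_image_pi_vec)
next
  fix z
  assume "z \<in> coord_code (Res C)"
  then obtain w w' where w: "w \<in> C" "pi_vec z = pi_vec w" and w': "w' \<in> C" "zeta_vec z = pi_vec w'"
    by (auto simp: coord_code_def Res_eq_image_pi_vec)
  have "z = (\<lambda>i. Kap * w i + Zet * w' i)"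
    using w(2) w'(2)
    by (simp add: vec_eq_iff_coords fun_eq_iff pi_vec_def zeta_vec_def piE_add piE_mult
        zeta_coord_add zeta_coord_mult)
  also have "\<dots> \<in> C"
    using lin w(1) w'(1) by (simp add: E_linear_def)
  finally show "z \<in> C" .
qed

lemma SHullE_coord_code:
  assumes "(\<lambda>i. 0) \<in> R"
  shows "SHullE n (coord_code R) = coord_code (SHullB n R)"
proof (intro equalityI subsetI)
  fix z
  assume "z \<in> SHullE n (coord_code R)"
  then have z: "z \<in> coord_code R" "z \<in> Evecs n"
    and orth: "\<And>w. w \<in> coord_code R \<Longrightarrow> sympE n z w = 0"
    by (auto simp: SHullE_def sperpE_def)
  have "sympB n (pi_vec z) r = 0 \<and> sympB n (zeta_vec z) r = 0" if "r \<in> R" for r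
    using orth [of "kappa_vec r"] kappa_vec_in_coord_code that assms
    by (simp add: coord_code_def sympE_eq_0_iff)
  moreover have "pi_vec z \<in> Bvecs n" "zeta_vec z \<in> Bvecs n"
    using z(2) by (auto simp: Evecs_def Bvecs_def pi_vec_def zeta_vec_def)
  ultimately show "z \<in> coord_code (SHullB n R)"
    using z(1) by (simp add: coord_code_def SHullB_def sperpB_def)
next
  fix z
  assume "z \<in> coord_code (SHullB n R)"
  then have z: "pi_vec z \<in> R" "zeta_vec z \<in> R" "pi_vec z \<in> Bvecs n" "zeta_vec z \<in> Bvecs n"
    and orth: "\<And>r. r \<in> R \<Longrightarrow> sympB n (pi_vec z) r = 0 \<and> sympB n (zeta_vec z) r = 0"
    by (auto simp: coord_code_def SHullB_def sperpB_def)
  have "z \<in> Evecs n"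
    using z(3,4) by (auto simp: Evecs_def Bvecs_def pi_vec_def zeta_vec_def E_eq_0_iff_coords)
  moreover have "sympE n z w = 0 \<and> sympE n w z = 0" if "w \<in> coord_code R" for w
    using that orth z(1) by (simp add: coord_code_def sympE_eq_0_iff sympB_commute [of n _ "pi_vec z"])
  ultimately show "z \<in> SHullE n (coord_code R)"
    using z(1,2) by (simp add: SHullE_def sperpE_def coord_code_def)
qed

lemma add_closed_Res:
  assumes "E_linear n C"
  shows "add_closed (Res C)"
  unfolding add_closed_def
proof (intro conjI ballI)
  show "(\<lambda>i. 0) \<in> Res C"
    using assms image_eqI [of "\<lambda>i. 0" pi_vec "\<lambda>i. 0" C]
    by (simp add: Res_eq_image_pi_vec E_linear_def pi_vec_def [abs_def])
  fix a b assume "a \<in> Res C" "b \<in> Res C"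
  then obtain x y where "x \<in> C" "y \<in> C" "a = pi_vec x" "b = pi_vec y"
    by (auto simp: Res_eq_image_pi_vec)
  moreover have "(\<lambda>i. pi_vec x i + pi_vec y i) = pi_vec (\<lambda>i. x i + y i)"
    by (simp add: fun_eq_iff pi_vec_def piE_add)
  ultimately show "(\<lambda>i. a i + b i) \<in> Res C"
    using assms by (auto simp: Res_eq_image_pi_vec E_linear_def)
qed

theorem mainTheorem17:
  fixes n :: nat and C :: "(nat \<Rightarrow> E) set"
  assumes "E_linear n C" and "free_code n C"
  shows "rankE n (SHullE n C) = dimF2 (SHullB n (Res C))"
proof -
  have R: "add_closed (Res C)"
    using assms(1) by (rule add_closed_Res)
  have "SHullE n C = coord_code (SHullB n (Res C))"
    using free_code_eq_coord_code [OF assms] SHullE_coord_code R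
    by (metis add_closed_def)
  then show ?thesis
    using rankE_coord_code add_closed_SHullB [OF R] SHullB_subset_Bvecs by simp
qed

end
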